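(* Let $p\ge3$ and consider the 1D FUSE semi-discretisation (context) of $\partial_t u+\partial_x F(u)=0$, with $F$ continuously differentiable, on a periodic mesh, using as reference nodes the Gauss–Legendre-plus-endpoints nodes: $r_0=-1$, $r_p=1$, and $r_1<\dots<r_{p-1}$ the $p-1$ Gauss–Legendre quadrature points on $[-1,1]$ with weights $\omega_1,\dots,\omega_{p-1}$. For each element define $\bar u_k=\tfrac12\sum_{i=1}^{p-1}\omega_i\,u_{i,k}$. Then (i) $\bar u_k=\frac{1}{|K_k|}\int_{K_k}u_h\,dx$, where $u_h|_{K_k}$ is the degree-$\le p$ interpolant of the nodal values on $K_k$; (ii) along solutions of the FUSE semi-discretisation, $$\frac{d\bar u_k}{dt}+\frac{1}{|K_k|}\Big(F(u_{p,k})-F(u_{0,k})\Big)=0\quad\text{for every }k;$$ and consequently (iii) $\frac{d}{dt}\sum_{k=1}^N |K_k|\,\bar u_k=0$, i.e. $\int_\Omega u_h\,dx$ is conserved (for a uniform mesh, $\sum_k\bar u_k$ is conserved).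
   Context: Setting: $\Omega=[0,1]$, periodic, mesh $0=x_0<\dots<x_N=1$, elements $K_k=[x_{k-1},x_k]$ (indices mod $N$), $|K_k|=x_k-x_{k-1}$. Nodes $s_{i,k}=x_{k-1}+\tfrac{r_i+1}{2}|K_k|$, $i=0,\dots,p$, with boundary nodes shared ($s_{p,k}=s_{0,k+1}$, a single nodal value, so $u_{p,k}=u_{0,k+1}$). $F_h^{(k)}$ is the polynomial of degree $\le p$ on $K_k$ with $F_h^{(k)}(s_{i,k})=F(u_{i,k})$. FUSE semi-discretisation: interior nodes $\frac{d}{dt}u_{i,k}=-(F_h^{(k)})'(s_{i,k})$ for $1\le i\le p-1$; at a shared node $s=s_{p,k}=s_{0,k+1}$ with value $u_s$, $\frac{d}{dt}u_s=-(F_h^{(k)})'(s)$ if $F'(u_s)>0$ and $-(F_h^{(k+1)})'(s)$ otherwise. *)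

theory Defs
  imports "HOL-Analysis.Analysis" "HOL-Computational_Algebra.Polynomial"
begin

definition legendre_poly :: "nat \<Rightarrow> real poly" where
  "legendre_poly n = smult (1 / (2 ^ n * fact n)) ((pderiv ^^ n) ([:-1, 0, 1:] ^ n))"

definition gl_nodes :: "nat \<Rightarrow> (nat \<Rightarrow> real) \<Rightarrow> bool" where
  "gl_nodes m r \<longleftrightarrow> (\<forall>i\<in>{1..m}. poly (legendre_poly m) (r i) = 0) \<and>
     (\<forall>i j. 1 \<le> i \<longrightarrow> i < j \<longrightarrow> j \<le> m \<longrightarrow> r i < r j)"

definition gl_weight :: "nat \<Rightarrow> (nat \<Rightarrow> real) \<Rightarrow> nat \<Rightarrow> real" where
  "gl_weight m r i = integral {-1..1} (\<lambda>y. \<Prod>j\<in>{1..m}-{i}. (y - r j) / (r i - r j))"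

definition lagrange_interp :: "nat \<Rightarrow> (nat \<Rightarrow> real) \<Rightarrow> (nat \<Rightarrow> real) \<Rightarrow> real \<Rightarrow> real" where
  "lagrange_interp p s v y = (\<Sum>i\<le>p. v i * (\<Prod>j\<in>{..p}-{i}. (y - s j) / (s i - s j)))"

definition fuse_node :: "(nat \<Rightarrow> real) \<Rightarrow> (nat \<Rightarrow> real) \<Rightarrow> nat \<Rightarrow> nat \<Rightarrow> real" where
  "fuse_node x r k i = x (k - 1) + (r i + 1) / 2 * (x k - x (k - 1))"

definition next_el :: "nat \<Rightarrow> nat \<Rightarrow> nat" where
  "next_el N k = (if k = N then 1 else k + 1)"

end

theory Submission
  imports Defs
begin

(* Gauss-Legendre quadrature with p - 1 nodes is exact for polynomials of degree at most 2p - 3,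
   which is at least p when p \<ge> 3. Pulling each element back affinely to [-1,1], it therefore
   computes the element average of the degree-p interpolant u_h exactly from the interior nodal
   values, and it integrates the derivative of the flux interpolant F_h (degree p - 1) exactly,
   giving F(u_{p,k}) - F(u_{0,k}). Since the interior nodes evolve by -F_h', this yields the
   element balance law; summing over elements, the fluxes at the shared nodes telescope.
   Only interior nodes enter the averages. *)

lemma integral_poly_pderiv:
  fixes P :: "real poly"
  assumes "a \<le> b"
  shows "integral {a..b} (poly (pderiv P)) = poly P b - poly P a"
proof -
  have "(poly P has_real_derivative poly (pderiv P) y) (at y within {a..b})" for y
    by (rule has_field_derivative_at_within[OF poly_DERIV])
  then have "(poly (pderiv P) has_integral (poly P b - poly P a)) {a..b}"
    by (intro fundamental_theorem_of_calculus[OF assms])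
       (simp add: has_real_derivative_iff_has_vector_derivative[symmetric])
  then show ?thesis
    by (rule integral_unique)
qed

lemma poly_integrable_on: "poly (P :: real poly) integrable_on {a..b}"
  by (intro integrable_continuous_real continuous_intros)

lemma integral_affine_reference:
  fixes f :: "real \<Rightarrow> real"
  assumes "x0 < x1" and "continuous_on {x0..x1} f"
  shows "integral {x0..x1} f = (x1 - x0) / 2 * integral {-1..1} (\<lambda>y. f ((x0 + x1) / 2 + (x1 - x0) / 2 * y))"
proof -
  define g where "g y = (x0 + x1) / 2 + (x1 - x0) / 2 * y" for y
  have g_ends: "g (-1) = x0" "g 1 = x1"
    by (simp_all add: g_def field_simps)
  have g_image: "g ` {-1..1} \<subseteq> {x0..x1}"
  proof clarify
    fix y :: real assume "y \<in> {-1..1}"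
    then have "(x1 - x0) * -1 \<le> (x1 - x0) * y" "(x1 - x0) * y \<le> (x1 - x0) * 1"
      using assms(1) by (intro mult_left_mono; simp)+
    then show "g y \<in> {x0..x1}"
      by (simp add: g_def field_simps)
  qed
  have g_deriv: "(g has_real_derivative (x1 - x0) / 2) (at y within {-1..1})" for y
    unfolding g_def by (auto intro!: derivative_eq_intros)
  have "((\<lambda>y. ((x1 - x0) / 2) *\<^sub>R f (g y)) has_integral integral {g (-1)..g 1} f) {-1..1}"
    by (rule has_integral_substitution[where c = x0 and d = x1]) (use assms g_image g_deriv in \<open>auto simp: g_ends\<close>)
  then have "integral {x0..x1} f = integral {-1..1} (\<lambda>y. (x1 - x0) / 2 * f (g y))"
    unfolding g_ends by (auto dest: integral_unique)
  then show ?thesis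
    by (simp add: g_def)
qed

subsection \<open>Legendre polynomials\<close>

lemma pderiv_linear_power_mult:
  fixes G :: "real poly"
  shows "pderiv ([:-c, 1:] ^ Suc n * G) = [:-c, 1:] ^ n * (smult (of_nat (Suc n)) G + [:-c, 1:] * pderiv G)"
  unfolding pderiv_mult pderiv_power_Suc by (simp add: pderiv_pCons algebra_simps)

lemma linear_power_dvd_higher_pderiv:
  fixes P :: "real poly"
  assumes "[:-c, 1:] ^ (k + n) dvd P"
  shows "[:-c, 1:] ^ n dvd (pderiv ^^ k) P"
  using assms
proof (induction k arbitrary: P)
  case (Suc k)
  then obtain G where "P = [:-c, 1:] ^ Suc (k + n) * G"
    unfolding add_Suc by (elim dvdE)
  then have "pderiv P = [:-c, 1:] ^ (k + n) * (smult (of_nat (Suc (k + n))) G + [:-c, 1:] * pderiv G)"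
    by (simp only: pderiv_linear_power_mult)
  then have "[:-c, 1:] ^ (k + n) dvd pderiv P"
    by simp
  then show ?case
    using Suc.IH by (simp add: funpow_Suc_right del: funpow.simps)
qed simp

lemma higher_pderiv_linear_power_nonroot:
  fixes G :: "real poly"
  assumes "poly G c \<noteq> 0"
  shows "poly ((pderiv ^^ n) ([:-c, 1:] ^ n * G)) c \<noteq> 0"
  using assms
proof (induction n arbitrary: G)
  case (Suc n)
  have "(pderiv ^^ Suc n) ([:-c, 1:] ^ Suc n * G)
      = (pderiv ^^ n) ([:-c, 1:] ^ n * (smult (of_nat (Suc n)) G + [:-c, 1:] * pderiv G))"
    by (simp only: funpow_Suc_right comp_def pderiv_linear_power_mult)
  moreover have "poly (smult (of_nat (Suc n)) G + [:-c, 1:] * pderiv G) c \<noteq> 0"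
    using Suc.prems by simp
  ultimately show ?case
    using Suc.IH by simp
qed simp

lemma rodrigues_power_factor:
  assumes "c \<in> {-1, 1}"
  shows "[:-1, 0, 1:] ^ m = [:-c, 1:] ^ m * [:c, 1 :: real:] ^ m"
proof -
  have "c * c = 1"
    using assms by auto
  then have "[:-1, 0, 1:] = [:-c, 1:] * [:c, 1 :: real:]"
    by simp
  then show ?thesis
    by (simp only: power_mult_distrib)
qed

lemma degree_legendre_poly: "degree (legendre_poly m) = m"
proof -
  have "degree ((pderiv ^^ k) P) = degree P - k" for k and P :: "real poly"
    by (induction k) (auto simp: degree_pderiv)
  moreover have "degree ([:-1, 0, 1:] ^ m :: real poly) = 2 * m"
    by (simp add: degree_power_eq)
  ultimately show ?thesis
    by (simp add: legendre_poly_def)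
qed

lemma legendre_poly_endpoint_nonzero:
  assumes "c \<in> {-1, 1}"
  shows "poly (legendre_poly m) c \<noteq> 0"
proof -
  have "poly ([:c, 1 :: real:] ^ m) c \<noteq> 0"
    using assms by auto
  then have "poly ((pderiv ^^ m) ([:-c, 1:] ^ m * [:c, 1:] ^ m)) c \<noteq> 0"
    by (rule higher_pderiv_linear_power_nonroot)
  then show ?thesis
    using assms by (simp add: legendre_poly_def rodrigues_power_factor[OF assms])
qed

lemma higher_pderiv_rodrigues_endpoint:
  assumes "k < m" and "c \<in> {-1, 1}"
  shows "poly ((pderiv ^^ k) ([:-1, 0, 1:] ^ m :: real poly)) c = 0"
proof -
  have "[:-c, 1:] ^ (k + (m - k)) dvd ([:-1, 0, 1:] ^ m :: real poly)"
    using assms by (simp add: rodrigues_power_factor)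
  then have "[:-c, 1:] ^ (m - k) dvd (pderiv ^^ k) ([:-1, 0, 1:] ^ m :: real poly)"
    by (rule linear_power_dvd_higher_pderiv)
  moreover have "[:-c, 1:] dvd [:-c, 1:] ^ (m - k)"
    using assms(1) by (simp add: dvd_power)
  ultimately show ?thesis
    by (simp add: poly_eq_0_iff_dvd dvd_trans)
qed

lemma higher_pderiv_rodrigues_orthogonal:
  fixes q :: "real poly"
  assumes "k \<le> m" and "degree q < k"
  shows "integral {-1..1} (poly ((pderiv ^^ k) ([:-1, 0, 1:] ^ m) * q)) = 0"
  using assms
proof (induction k arbitrary: q)
  case (Suc k)
  define D where "D = (pderiv ^^ k) ([:-1, 0, 1:] ^ m :: real poly)"
  have "integral {-1..1} (poly (pderiv (D * q))) = poly (D * q) 1 - poly (D * q) (-1)"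
    by (rule integral_poly_pderiv) simp
  also have "\<dots> = 0"
    using Suc.prems higher_pderiv_rodrigues_endpoint[of k m] by (simp add: D_def)
  finally have boundary_terms: "integral {-1..1} (poly (pderiv (D * q))) = 0" .
  have product_rule: "poly (pderiv (D * q)) = (\<lambda>y. poly (pderiv D * q) y + poly (D * pderiv q) y)"
    by (simp add: fun_eq_iff pderiv_mult algebra_simps)
  have by_parts: "integral {-1..1} (poly (pderiv D * q)) + integral {-1..1} (poly (D * pderiv q)) = 0"
    using boundary_terms by (simp only: product_rule integral_add[OF poly_integrable_on poly_integrable_on])
  have "integral {-1..1} (poly (D * pderiv q)) = 0"
  proof (cases "pderiv q = 0")
    case False
    then have "degree (pderiv q) < k"
      using Suc.prems(2) by (auto simp: degree_pderiv pderiv_eq_0_iff)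
    then show ?thesis
      unfolding D_def using Suc.IH Suc.prems(1) by (simp del: poly_mult)
  qed (simp add: poly_0[abs_def])
  moreover have "(pderiv ^^ Suc k) ([:-1, 0, 1:] ^ m) = pderiv D"
    by (simp add: D_def)
  ultimately show ?case
    using by_parts by (simp del: poly_mult)
qed simp

lemma legendre_poly_orthogonal:
  fixes q :: "real poly"
  assumes "degree q < m"
  shows "integral {-1..1} (poly (legendre_poly m * q)) = 0"
proof -
  have "poly (legendre_poly m * q) = (\<lambda>y. (1 / (2 ^ m * fact m)) * poly ((pderiv ^^ m) ([:-1, 0, 1:] ^ m) * q) y)"
    by (simp add: legendre_poly_def fun_eq_iff)
  then show ?thesis
    using higher_pderiv_rodrigues_orthogonal[of m m q] assms by (simp only: integral_mult_right)
qed

subsection \<open>Lagrange interpolation\<close>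

definition lagrange_basis :: "nat set \<Rightarrow> (nat \<Rightarrow> real) \<Rightarrow> nat \<Rightarrow> real poly" where
  "lagrange_basis I s i = (\<Prod>j\<in>I - {i}. smult (1 / (s i - s j)) [:-s j, 1:])"

lemma poly_lagrange_basis: "poly (lagrange_basis I s i) y = (\<Prod>j\<in>I - {i}. (y - s j) / (s i - s j))"
  unfolding lagrange_basis_def poly_prod by (intro prod.cong) (auto simp: diff_divide_distrib)

lemma degree_lagrange_basis:
  assumes "finite I" and "i \<in> I"
  shows "degree (lagrange_basis I s i) \<le> card I - 1"
proof -
  have "degree (lagrange_basis I s i) \<le> sum (degree \<circ> (\<lambda>j. smult (1 / (s i - s j)) [:-s j, 1:])) (I - {i})"
    unfolding lagrange_basis_def by (rule degree_prod_sum_le) (use assms in simp)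
  also have "\<dots> \<le> (\<Sum>j\<in>I - {i}. 1)"
    by (intro sum_mono) simp
  also have "\<dots> = card I - 1"
    using assms by (simp add: card_Diff_singleton)
  finally show ?thesis .
qed

lemma poly_lagrange_basis_node:
  assumes "finite I" and "inj_on s I" and "i \<in> I" and "j \<in> I"
  shows "poly (lagrange_basis I s i) (s j) = (if i = j then 1 else 0)"
proof (cases "i = j")
  case True
  have "s i \<noteq> s k" if "k \<in> I - {i}" for k
    using assms(2,3) that by (auto dest: inj_onD)
  then show ?thesis
    using True by (simp add: poly_lagrange_basis)
next
  case False
  then show ?thesis
    using assms(1,4) by (auto simp: poly_lagrange_basis intro!: prod_zero bexI[of _ j])
qed

lemma lagrange_basis_expansion:
  fixes q :: "real poly"
  assumes "finite I" and "inj_on s I" and "degree q < card I"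
  shows "q = (\<Sum>i\<in>I. smult (poly q (s i)) (lagrange_basis I s i))"
proof (rule ccontr)
  define D where "D = q - (\<Sum>i\<in>I. smult (poly q (s i)) (lagrange_basis I s i))"
  assume "q \<noteq> (\<Sum>i\<in>I. smult (poly q (s i)) (lagrange_basis I s i))"
  then have "D \<noteq> 0"
    by (simp add: D_def)
  have "degree (\<Sum>i\<in>I. smult (poly q (s i)) (lagrange_basis I s i)) \<le> card I - 1"
    using degree_lagrange_basis[OF assms(1)] assms(1)
    by (intro degree_sum_le) (auto intro: order.trans[OF degree_smult_le])
  then have "degree D < card I"
    unfolding D_def using assms(3) degree_diff_le_max[of q "\<Sum>i\<in>I. smult (poly q (s i)) (lagrange_basis I s i)"]
    by linarith
  moreover have "s ` I \<subseteq> {y. poly D y = 0}"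
  proof clarify
    fix j assume "j \<in> I"
    then have "(\<Sum>i\<in>I. poly q (s i) * poly (lagrange_basis I s i) (s j)) = (\<Sum>i\<in>I. if i = j then poly q (s j) else 0)"
      using poly_lagrange_basis_node[OF assms(1,2)] by (intro sum.cong) auto
    then show "poly D (s j) = 0"
      using \<open>j \<in> I\<close> assms(1) by (simp add: D_def poly_sum)
  qed
  then have "card I \<le> card {y. poly D y = 0}"
    using card_mono[OF poly_roots_finite[OF \<open>D \<noteq> 0\<close>]] assms(2) by (metis card_image)
  ultimately show False
    using card_poly_roots_bound[OF \<open>D \<noteq> 0\<close>] by linarith
qed

definition lagrange_poly :: "nat \<Rightarrow> (nat \<Rightarrow> real) \<Rightarrow> (nat \<Rightarrow> real) \<Rightarrow> real poly" where
  "lagrange_poly p s v = (\<Sum>i\<le>p. smult (v i) (lagrange_basis {..p} s i))"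

lemma lagrange_interp_eq_poly: "lagrange_interp p s v = poly (lagrange_poly p s v)"
  by (auto simp: lagrange_interp_def lagrange_poly_def poly_sum poly_lagrange_basis)

lemma degree_lagrange_poly: "degree (lagrange_poly p s v) \<le> p"
  unfolding lagrange_poly_def
  using degree_lagrange_basis[of "{..p}" _ s]
  by (intro degree_sum_le) (auto intro: order.trans[OF degree_smult_le])

lemma lagrange_interp_node:
  assumes "inj_on s {..p}" and "j \<le> p"
  shows "lagrange_interp p s v (s j) = v j"
proof -
  have "lagrange_interp p s v (s j) = (\<Sum>i\<le>p. if i = j then v j else 0)"
    unfolding lagrange_interp_eq_poly lagrange_poly_def poly_sum
    using poly_lagrange_basis_node[OF _ assms(1)] assms(2) by (intro sum.cong) auto
  then show ?thesis
    using assms(2) by simp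
qed

subsection \<open>Gauss-Legendre quadrature\<close>

lemma gl_weight_eq_integral_lagrange_basis:
  "gl_weight m r i = integral {-1..1} (poly (lagrange_basis {1..m} r i))"
  by (simp add: gl_weight_def poly_lagrange_basis[abs_def])

lemma gl_nodes_inj_on: "gl_nodes m r \<Longrightarrow> inj_on r {1..m}"
  by (intro strict_mono_on_imp_inj_on) (auto simp: strict_mono_on_def gl_nodes_def)

lemma integral_poly_eq_interpolatory_quadrature:
  fixes e :: "real poly"
  assumes "inj_on r {1..m}" and "degree e < m"
  shows "integral {-1..1} (poly e) = (\<Sum>i=1..m. gl_weight m r i * poly e (r i))"
proof -
  have "poly e = (\<lambda>y. \<Sum>i=1..m. poly e (r i) * poly (lagrange_basis {1..m} r i) y)"
    by (rule ext, subst (1) lagrange_basis_expansion[OF _ assms(1)]) (use assms(2) in \<open>auto simp: poly_sum\<close>)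
  then have "integral {-1..1} (poly e) = integral {-1..1} (\<lambda>y. \<Sum>i=1..m. poly e (r i) * poly (lagrange_basis {1..m} r i) y)"
    by (rule arg_cong)
  then show ?thesis
    by (subst (asm) integral_sum)
      (auto intro!: integrable_continuous_real continuous_intros simp: gl_weight_eq_integral_lagrange_basis mult.commute)
qed

theorem gauss_legendre_exact:
  fixes q :: "real poly"
  assumes nodes: "gl_nodes m r" and "m \<ge> 1" and deg_q: "degree q \<le> 2 * m - 1"
  shows "integral {-1..1} (poly q) = (\<Sum>i=1..m. gl_weight m r i * poly q (r i))"
proof -
  define L where "L = legendre_poly m"
  define d where "d = q div L"
  define e where "e = q mod L"
  have deg_L: "degree L = m"
    by (simp add: L_def degree_legendre_poly)
  then have "L \<noteq> 0"
    using \<open>m \<ge> 1\<close> by auto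
  have q_split: "q = L * d + e"
    by (simp add: d_def e_def mult.commute)
  have deg_e: "degree e < m"
    using degree_mod_less[OF \<open>L \<noteq> 0\<close>, of q] deg_L \<open>m \<ge> 1\<close> by (cases "e = 0") (auto simp: e_def)
  have deg_d: "degree d < m"
  proof (cases "d = 0")
    case False
    have "m + degree d = degree (q - e)"
      using False \<open>L \<noteq> 0\<close> deg_L q_split by (simp add: degree_mult_eq)
    also have "\<dots> \<le> 2 * m - 1"
      using degree_diff_le_max[of q e] deg_q deg_e by linarith
    finally show ?thesis
      using \<open>m \<ge> 1\<close> by linarith
  qed (use \<open>m \<ge> 1\<close> in simp)
  have e_at_nodes: "poly e (r i) = poly q (r i)" if "i \<in> {1..m}" for i
    using nodes that q_split by (simp add: gl_nodes_def L_def)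
  have "integral {-1..1} (poly q) = integral {-1..1} (\<lambda>y. poly (L * d) y + poly e y)"
    by (subst q_split) (simp only: poly_add[abs_def])
  also have "\<dots> = integral {-1..1} (poly (L * d)) + integral {-1..1} (poly e)"
    by (rule integral_add[OF poly_integrable_on poly_integrable_on])
  also have "integral {-1..1} (poly (L * d)) = 0"
    unfolding L_def by (rule legendre_poly_orthogonal[OF deg_d])
  also have "integral {-1..1} (poly e) = (\<Sum>i=1..m. gl_weight m r i * poly e (r i))"
    by (rule integral_poly_eq_interpolatory_quadrature[OF gl_nodes_inj_on[OF nodes] deg_e])
  finally show ?thesis
    using e_at_nodes by simp
qed

lemma gl_nodes_with_endpoints_inj_on:
  assumes nodes: "gl_nodes (p - 1) r" and "r 0 = -1" and "r p = 1"
  shows "inj_on r {..p}"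
proof (rule inj_onI)
  have interior: "r i \<notin> {-1, 1}" if "i \<in> {1..p - 1}" for i
    using nodes that legendre_poly_endpoint_nonzero[of "r i" "p - 1"] by (auto simp: gl_nodes_def)
  fix i j
  assume "i \<in> {..p}" "j \<in> {..p}" "r i = r j"
  then consider "i = j" | "i \<in> {0, p}" "j \<in> {0, p}" | "i \<in> {1..p - 1}" "j \<in> {1..p - 1}"
    | "i \<in> {1..p - 1}" "j \<in> {0, p}" | "i \<in> {0, p}" "j \<in> {1..p - 1}"
    by fastforce
  then show "i = j"
    using \<open>r i = r j\<close> assms interior inj_onD[OF gl_nodes_inj_on[OF nodes]] by cases force+
qed

lemma integral_lagrange_interp_gauss_legendre:
  assumes "p \<ge> 3" and nodes: "gl_nodes (p - 1) r" and "r 0 = -1" and "r p = 1"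
  shows "integral {-1..1} (lagrange_interp p r v) = (\<Sum>i=1..p-1. gl_weight (p - 1) r i * v i)"
proof -
  have "degree (lagrange_poly p r v) \<le> 2 * (p - 1) - 1"
    using degree_lagrange_poly[of p r v] \<open>p \<ge> 3\<close> by linarith
  then have "integral {-1..1} (lagrange_interp p r v)
      = (\<Sum>i=1..p-1. gl_weight (p - 1) r i * lagrange_interp p r v (r i))"
    unfolding lagrange_interp_eq_poly using \<open>p \<ge> 3\<close> by (intro gauss_legendre_exact[OF nodes]) auto
  also have "\<dots> = (\<Sum>i=1..p-1. gl_weight (p - 1) r i * v i)"
    using lagrange_interp_node[OF gl_nodes_with_endpoints_inj_on[OF nodes assms(3,4)]] by (intro sum.cong) auto
  finally show ?thesis .
qed

lemma sum_gauss_legendre_deriv_lagrange_interp: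
  assumes "p \<ge> 2" and nodes: "gl_nodes (p - 1) r" and "r 0 = -1" and "r p = 1"
  shows "(\<Sum>i=1..p-1. gl_weight (p - 1) r i * deriv (lagrange_interp p r v) (r i)) = v p - v 0"
proof -
  define Q where "Q = lagrange_poly p r v"
  have deriv_Q: "deriv (lagrange_interp p r v) y = poly (pderiv Q) y" for y
    by (simp add: Q_def lagrange_interp_eq_poly DERIV_imp_deriv[OF poly_DERIV])
  have "degree (pderiv Q) \<le> 2 * (p - 1) - 1"
    using degree_lagrange_poly[of p r v] \<open>p \<ge> 2\<close> by (simp add: Q_def degree_pderiv)
  then have "(\<Sum>i=1..p-1. gl_weight (p - 1) r i * poly (pderiv Q) (r i)) = integral {-1..1} (poly (pderiv Q))"
    using \<open>p \<ge> 2\<close> by (intro gauss_legendre_exact[OF nodes, symmetric]) auto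
  also have "\<dots> = lagrange_interp p r v (r p) - lagrange_interp p r v (r 0)"
    using assms(3,4) by (simp add: integral_poly_pderiv Q_def lagrange_interp_eq_poly)
  also have "\<dots> = v p - v 0"
    using lagrange_interp_node[OF gl_nodes_with_endpoints_inj_on[OF nodes assms(3,4)]] by simp
  finally show ?thesis
    by (simp add: deriv_Q)
qed

lemma lagrange_interp_affine_nodes:
  fixes c d :: real
  assumes "d \<noteq> 0"
  shows "lagrange_interp p (\<lambda>i. c + d * s i) v z = lagrange_interp p s v ((z - c) / d)"
proof -
  have "(z - (c + d * s j)) / (c + d * s i - (c + d * s j)) = ((z - c) / d - s j) / (s i - s j)" for i j
  proof -
    have "z - (c + d * s j) = d * ((z - c) / d - s j)"
      using assms by (simp add: field_simps)
    moreover have "c + d * s i - (c + d * s j) = d * (s i - s j)"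
      by (simp add: algebra_simps)
    ultimately show ?thesis
      using assms by simp
  qed
  then show ?thesis
    by (simp add: lagrange_interp_def)
qed

lemma deriv_lagrange_interp_affine_nodes:
  fixes c d :: real
  assumes "d \<noteq> 0"
  shows "deriv (lagrange_interp p (\<lambda>i. c + d * s i) v) (c + d * y) = deriv (lagrange_interp p s v) y / d"
proof -
  define Q where "Q = lagrange_poly p s v"
  have "lagrange_interp p (\<lambda>i. c + d * s i) v = (\<lambda>z. lagrange_interp p s v ((z - c) / d))"
    using lagrange_interp_affine_nodes[OF assms] by blast
  also have "\<dots> = (\<lambda>z. poly Q ((z - c) / d))"
    by (simp add: Q_def lagrange_interp_eq_poly)
  finally have pullback: "lagrange_interp p (\<lambda>i. c + d * s i) v = (\<lambda>z. poly Q ((z - c) / d))" .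
  have "((\<lambda>z. (z - c) / d) has_real_derivative 1 / d) (at (c + d * y))"
    using assms by (auto intro!: derivative_eq_intros)
  from DERIV_chain'[OF this poly_DERIV[of Q]]
  have "((\<lambda>z. poly Q ((z - c) / d)) has_real_derivative poly (pderiv Q) y * (1 / d)) (at (c + d * y))"
    using assms by simp
  then have "deriv (lagrange_interp p (\<lambda>i. c + d * s i) v) (c + d * y) = poly (pderiv Q) y / d"
    unfolding pullback by (simp add: DERIV_imp_deriv)
  moreover have "deriv (lagrange_interp p s v) y = poly (pderiv Q) y"
    by (simp add: Q_def lagrange_interp_eq_poly DERIV_imp_deriv[OF poly_DERIV])
  ultimately show ?thesis
    by simp
qed

lemma fuse_node_affine: "fuse_node x r k = (\<lambda>i. (x (k - 1) + x k) / 2 + (x k - x (k - 1)) / 2 * r i)"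
  by (simp add: fuse_node_def fun_eq_iff field_simps)

lemma fuse_element_average:
  assumes "p \<ge> 3" and "gl_nodes (p - 1) r" and "r 0 = -1" and "r p = 1" and "x (k - 1) < x k"
  shows "(1 / 2) * (\<Sum>i=1..p-1. gl_weight (p - 1) r i * v i)
    = integral {x (k - 1)..x k} (lagrange_interp p (fuse_node x r k) v) / (x k - x (k - 1))"
proof -
  define c where "c = (x (k - 1) + x k) / 2"
  define d where "d = (x k - x (k - 1)) / 2"
  have "d \<noteq> 0"
    using assms(5) by (simp add: d_def)
  have "integral {x (k - 1)..x k} (lagrange_interp p (fuse_node x r k) v)
      = d * integral {-1..1} (\<lambda>y. lagrange_interp p (fuse_node x r k) v (c + d * y))"
    unfolding c_def d_def lagrange_interp_eq_poly
    by (rule integral_affine_reference[OF assms(5)]) (intro continuous_intros)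
  also have "(\<lambda>y. lagrange_interp p (fuse_node x r k) v (c + d * y)) = lagrange_interp p r v"
    unfolding fuse_node_affine c_def[symmetric] d_def[symmetric]
    using \<open>d \<noteq> 0\<close> by (simp add: fun_eq_iff lagrange_interp_affine_nodes)
  also have "integral {-1..1} (lagrange_interp p r v) = (\<Sum>i=1..p-1. gl_weight (p - 1) r i * v i)"
    using integral_lagrange_interp_gauss_legendre assms(1-4) .
  finally show ?thesis
    using assms(5) by (simp add: d_def)
qed

lemma fuse_element_flux_balance:
  assumes "p \<ge> 2" and "gl_nodes (p - 1) r" and "r 0 = -1" and "r p = 1" and "x (k - 1) < x k"
  shows "(\<Sum>i=1..p-1. gl_weight (p - 1) r i * deriv (lagrange_interp p (fuse_node x r k) v) (fuse_node x r k i))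
    = 2 * (v p - v 0) / (x k - x (k - 1))"
proof -
  define d where "d = (x k - x (k - 1)) / 2"
  have "d \<noteq> 0"
    using assms(5) by (simp add: d_def)
  then have "deriv (lagrange_interp p (fuse_node x r k) v) (fuse_node x r k i) = deriv (lagrange_interp p r v) (r i) / d" for i
    unfolding fuse_node_affine d_def by (rule deriv_lagrange_interp_affine_nodes)
  then have "(\<Sum>i=1..p-1. gl_weight (p - 1) r i * deriv (lagrange_interp p (fuse_node x r k) v) (fuse_node x r k i))
      = (\<Sum>i=1..p-1. gl_weight (p - 1) r i * deriv (lagrange_interp p r v) (r i)) / d"
    by (simp add: sum_divide_distrib)
  also have "\<dots> = (v p - v 0) / d"
    using sum_gauss_legendre_deriv_lagrange_interp assms(1-4) by simp
  finally show ?thesis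
    by (simp add: d_def)
qed

lemma fuse_element_balance_law:
  assumes "p \<ge> 2" and "gl_nodes (p - 1) r" and "r 0 = -1" and "r p = 1" and "x (k - 1) < x k"
    and interior: "\<forall>i\<in>{1..p-1}. ((\<lambda>\<tau>. u \<tau> i) has_real_derivative
      - deriv (lagrange_interp p (fuse_node x r k) (\<lambda>j. F (u t j))) (fuse_node x r k i)) (at t)"
  shows "((\<lambda>\<tau>. (1 / 2) * (\<Sum>i=1..p-1. gl_weight (p - 1) r i * u \<tau> i)) has_real_derivative
      - (F (u t p) - F (u t 0)) / (x k - x (k - 1))) (at t)"
proof -
  have "((\<lambda>\<tau>. (1 / 2) * (\<Sum>i=1..p-1. gl_weight (p - 1) r i * u \<tau> i)) has_real_derivative (1 / 2) *
      (\<Sum>i=1..p-1. gl_weight (p - 1) r i * - deriv (lagrange_interp p (fuse_node x r k) (\<lambda>j. F (u t j))) (fuse_node x r k i)))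
      (at t)"
    using interior by (intro DERIV_cmult DERIV_sum) auto
  moreover have "(1 / 2) *
      (\<Sum>i=1..p-1. gl_weight (p - 1) r i * - deriv (lagrange_interp p (fuse_node x r k) (\<lambda>j. F (u t j))) (fuse_node x r k i))
      = - (F (u t p) - F (u t 0)) / (x k - x (k - 1))"
    using fuse_element_flux_balance[OF assms(1-5), of "\<lambda>j. F (u t j)"] assms(5)
    by (simp add: sum_negf field_simps)
  ultimately show ?thesis
    by (rule DERIV_cong)
qed

lemma sum_periodic_differences:
  assumes "N \<ge> 1" and "\<forall>k\<in>{1..N}. f_right k = f_left (next_el N k)"
  shows "(\<Sum>k=1..N. f_right k - f_left k) = (0 :: real)"
proof -
  have "(\<Sum>k=1..N. f_left (next_el N k)) = (\<Sum>k=1..N. f_left k)"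
    by (rule sum.reindex_bij_witness[of _ "\<lambda>k. if k = 1 then N else k - 1" "next_el N"])
      (use assms(1) in \<open>auto simp: next_el_def\<close>)
  then show ?thesis
    using assms(2) by (simp add: sum_subtractf)
qed

theorem mainTheorem4:
  fixes p N :: nat and x r :: "nat \<Rightarrow> real" and F dF :: "real \<Rightarrow> real"
    and u :: "real \<Rightarrow> nat \<Rightarrow> nat \<Rightarrow> real" and a b :: real
  assumes p3: "p \<ge> 3" and N1: "N \<ge> 1"
    and mesh0: "x 0 = 0" and mesh1: "x N = 1" and mesh_mono: "\<forall>k<N. x k < x (Suc k)"
    and F_deriv: "\<forall>v. (F has_real_derivative dF v) (at v)" and dF_cont: "continuous_on UNIV dF"
    and r0: "r 0 = -1" and rp: "r p = 1" and r_gl: "gl_nodes (p - 1) r"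
    and shared: "\<forall>t\<in>{a<..<b}. \<forall>k\<in>{1..N}. u t p k = u t 0 (next_el N k)"
    and interior: "\<forall>t\<in>{a<..<b}. \<forall>k\<in>{1..N}. \<forall>i\<in>{1..p-1}.
        ((\<lambda>\<tau>. u \<tau> i k) has_real_derivative
          - deriv (lagrange_interp p (fuse_node x r k) (\<lambda>j. F (u t j k))) (fuse_node x r k i)) (at t)"
    and boundary: "\<forall>t\<in>{a<..<b}. \<forall>k\<in>{1..N}.
        ((\<lambda>\<tau>. u \<tau> p k) has_real_derivative
          (if dF (u t p k) > 0
           then - deriv (lagrange_interp p (fuse_node x r k) (\<lambda>j. F (u t j k))) (fuse_node x r k p)
           else - deriv (lagrange_interp p (fuse_node x r (next_el N k)) (\<lambda>j. F (u t j (next_el N k))))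
                   (fuse_node x r (next_el N k) 0))) (at t)"
  defines "ubar \<equiv> \<lambda>t k. (1/2) * (\<Sum>i=1..p-1. gl_weight (p - 1) r i * u t i k)"
  shows "(\<forall>t. \<forall>k\<in>{1..N}. ubar t k =
            integral {x (k - 1)..x k} (lagrange_interp p (fuse_node x r k) (\<lambda>i. u t i k)) / (x k - x (k - 1)))
       \<and> (\<forall>t\<in>{a<..<b}. \<forall>k\<in>{1..N}. ((\<lambda>\<tau>. ubar \<tau> k) has_real_derivative
            - (F (u t p k) - F (u t 0 k)) / (x k - x (k - 1))) (at t))
       \<and> (\<forall>t\<in>{a<..<b}. ((\<lambda>\<tau>. \<Sum>k=1..N. (x k - x (k - 1)) * ubar \<tau> k) has_real_derivative 0) (at t))"
proof (intro conjI ballI allI)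
  have element: "x (k - 1) < x k" if "k \<in> {1..N}" for k
    using mesh_mono that by (metis Suc_diff_1 atLeastAtMost_iff diff_less less_le_trans zero_less_one)
  show "ubar t k = integral {x (k - 1)..x k} (lagrange_interp p (fuse_node x r k) (\<lambda>i. u t i k)) / (x k - x (k - 1))"
    if "k \<in> {1..N}" for t k
    unfolding ubar_def using fuse_element_average[OF p3 r_gl r0 rp element[OF that]] .
  show balance: "((\<lambda>\<tau>. ubar \<tau> k) has_real_derivative - (F (u t p k) - F (u t 0 k)) / (x k - x (k - 1))) (at t)"
    if "t \<in> {a<..<b}" and "k \<in> {1..N}" for t k
    unfolding ubar_def using p3 interior that
    by (intro fuse_element_balance_law[OF _ r_gl r0 rp element[OF that(2)], where u = "\<lambda>\<tau> i. u \<tau> i k"]) auto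
  show "((\<lambda>\<tau>. \<Sum>k=1..N. (x k - x (k - 1)) * ubar \<tau> k) has_real_derivative 0) (at t)"
    if "t \<in> {a<..<b}" for t
  proof -
    have "((\<lambda>\<tau>. \<Sum>k=1..N. (x k - x (k - 1)) * ubar \<tau> k) has_real_derivative
        (\<Sum>k=1..N. (x k - x (k - 1)) * (- (F (u t p k) - F (u t 0 k)) / (x k - x (k - 1))))) (at t)"
      using balance[OF that] by (intro DERIV_sum DERIV_cmult) auto
    also have "(\<Sum>k=1..N. (x k - x (k - 1)) * (- (F (u t p k) - F (u t 0 k)) / (x k - x (k - 1))))
        = - (\<Sum>k=1..N. F (u t p k) - F (u t 0 k))"
      unfolding sum_negf[symmetric] using element by (intro sum.cong) (auto simp: order_less_imp_not_eq2)
    also have "(\<Sum>k=1..N. F (u t p k) - F (u t 0 k)) = 0"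
      using shared that by (intro sum_periodic_differences[OF N1]) auto
    finally show ?thesis
      by simp
  qed
qed

end
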